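(* Let $(X,\phi)$ be a ranked convex geometry with critical base $\Sigma$, and let $j\in X$. Let $\mathrm{pred}(j)=\{a\in X:\exists A\to j\in\Sigma,\ a\in A\}$ and let $\mathcal{H}_j$ be the hypergraph with vertex set $X\setminus\bigcap_{M\in j^{\nearrow}}M$ and edge set $\{X\setminus M: M\in j^{\nearrow}\}$. Then a set $A\subseteq X$ is a critical minimal generator of $j$ if and only if $A\in Tr(\mathcal{H}_j[\mathrm{pred}(j)])$.
   Context: $X$ is finite. A closure operator $\phi$ on $X$ is extensive, monotone and idempotent; $(X,\phi)$ is standard if $\phi(\emptyset)=\emptyset$ and $\phi(\{x\})\setminus\{x\}$ is closed for all $x$. A unit implicational base $\Sigma$ (implications $A\to b$, $A\subseteq X$, $b\in X$) is an implicational base of $(X,\phi)$ if its closed sets (sets $S$ with $A\not\subseteq S$ or $b\in S$ for each $A\to b\in\Sigma$) are exactly the closed sets of $\phi$. $\Sigma$ is ranked if there is $\rho:X\to\mathbb{N}$ with $\rho(a)=\rho(b)+1$ whenever $A\to b\in\Sigma$ and $a\in A$. A ranked convex geometry is a standard closure space admitting a ranked implicational base. $A$ is a minimal generator of $b$ if $b\in\phi(A)$ and $b\notin\phi(A\setminus\{x\})$ for all $x\in A$. The critical base is the unique irredundant implicational base all of whose implications $A\to b$ have $A$ a minimal generator of $b$; a minimal generator $A$ of $b$ is critical if $A\to b$ belongs to the critical base. For $j\in X$, $j^{\nearrow}$ is the set of inclusion-maximal closed sets not containing $j$. For a hypergraph $\mathcal{H}$ and $S\subseteq V(\mathcal{H})$,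 the induced hypergraph $\mathcal{H}[S]$ has vertex set $S$ and edge set $\{E\cap S: E\in\mathcal{E}(\mathcal{H})\}$; $Tr(\mathcal{H})$ is the set of inclusion-minimal vertex sets intersecting every edge. *)

theory Defs
  imports Main
begin

definition closure_operator :: "'a set \<Rightarrow> ('a set \<Rightarrow> 'a set) \<Rightarrow> bool" where
  "closure_operator X phi \<longleftrightarrow>
     (\<forall>A. A \<subseteq> X \<longrightarrow> A \<subseteq> phi A \<and> phi A \<subseteq> X) \<and>
     (\<forall>A B. A \<subseteq> B \<and> B \<subseteq> X \<longrightarrow> phi A \<subseteq> phi B) \<and>
     (\<forall>A. A \<subseteq> X \<longrightarrow> phi (phi A) = phi A)"

definition is_closed :: "'a set \<Rightarrow> ('a set \<Rightarrow> 'a set) \<Rightarrow> 'a set \<Rightarrow> bool" where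
  "is_closed X phi S \<longleftrightarrow> S \<subseteq> X \<and> phi S = S"

definition standard :: "'a set \<Rightarrow> ('a set \<Rightarrow> 'a set) \<Rightarrow> bool" where
  "standard X phi \<longleftrightarrow> closure_operator X phi \<and> phi {} = {} \<and>
     (\<forall>x\<in>X. is_closed X phi (phi {x} - {x}))"

text \<open>Unit implications A \<rightarrow> b are encoded as pairs (A, b).\<close>
definition unit_base :: "'a set \<Rightarrow> ('a set \<times> 'a) set \<Rightarrow> bool" where
  "unit_base X \<Sigma> \<longleftrightarrow> (\<forall>(A, b)\<in>\<Sigma>. A \<subseteq> X \<and> b \<in> X)"

definition base_closed :: "'a set \<Rightarrow> ('a set \<times> 'a) set \<Rightarrow> 'a set \<Rightarrow> bool" where
  "base_closed X \<Sigma> S \<longleftrightarrow> S \<subseteq> X \<and> (\<forall>(A, b)\<in>\<Sigma>. \<not> A \<subseteq> S \<or> b \<in> S)"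

definition implicational_base ::
  "'a set \<Rightarrow> ('a set \<Rightarrow> 'a set) \<Rightarrow> ('a set \<times> 'a) set \<Rightarrow> bool" where
  "implicational_base X phi \<Sigma> \<longleftrightarrow> unit_base X \<Sigma> \<and>
     (\<forall>S. base_closed X \<Sigma> S \<longleftrightarrow> is_closed X phi S)"

definition ranked :: "('a set \<times> 'a) set \<Rightarrow> bool" where
  "ranked \<Sigma> \<longleftrightarrow> (\<exists>\<rho> :: 'a \<Rightarrow> nat. \<forall>(A, b)\<in>\<Sigma>. \<forall>a\<in>A. \<rho> a = \<rho> b + 1)"

definition ranked_convex_geometry :: "'a set \<Rightarrow> ('a set \<Rightarrow> 'a set) \<Rightarrow> bool" where
  "ranked_convex_geometry X phi \<longleftrightarrow> finite X \<and> standard X phi \<and>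
     (\<exists>\<Sigma>. implicational_base X phi \<Sigma> \<and> ranked \<Sigma>)"

definition minimal_generator ::
  "'a set \<Rightarrow> ('a set \<Rightarrow> 'a set) \<Rightarrow> 'a set \<Rightarrow> 'a \<Rightarrow> bool" where
  "minimal_generator X phi A b \<longleftrightarrow> A \<subseteq> X \<and> b \<in> phi A \<and> (\<forall>x\<in>A. b \<notin> phi (A - {x}))"

definition irredundant_base ::
  "'a set \<Rightarrow> ('a set \<Rightarrow> 'a set) \<Rightarrow> ('a set \<times> 'a) set \<Rightarrow> bool" where
  "irredundant_base X phi \<Sigma> \<longleftrightarrow> implicational_base X phi \<Sigma> \<and>
     (\<forall>\<sigma>\<in>\<Sigma>. \<not> implicational_base X phi (\<Sigma> - {\<sigma>}))"

definition critical_base ::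
  "'a set \<Rightarrow> ('a set \<Rightarrow> 'a set) \<Rightarrow> ('a set \<times> 'a) set \<Rightarrow> bool" where
  "critical_base X phi \<Sigma> \<longleftrightarrow> irredundant_base X phi \<Sigma> \<and>
     (\<forall>(A, b)\<in>\<Sigma>. minimal_generator X phi A b)"

definition critical_minimal_generator ::
  "'a set \<Rightarrow> ('a set \<Rightarrow> 'a set) \<Rightarrow> ('a set \<times> 'a) set \<Rightarrow> 'a set \<Rightarrow> 'a \<Rightarrow> bool" where
  "critical_minimal_generator X phi \<Sigma> A b \<longleftrightarrow> minimal_generator X phi A b \<and> (A, b) \<in> \<Sigma>"

text \<open>j-up-arrow: inclusion-maximal closed sets not containing j.\<close>
definition max_closed_avoiding :: "'a set \<Rightarrow> ('a set \<Rightarrow> 'a set) \<Rightarrow> 'a \<Rightarrow> 'a set set" where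
  "max_closed_avoiding X phi j = {M. is_closed X phi M \<and> j \<notin> M \<and>
     (\<forall>M'. is_closed X phi M' \<and> j \<notin> M' \<and> M \<subseteq> M' \<longrightarrow> M' = M)}"

definition pred :: "('a set \<times> 'a) set \<Rightarrow> 'a \<Rightarrow> 'a set" where
  "pred \<Sigma> j = {a. \<exists>A. (A, j) \<in> \<Sigma> \<and> a \<in> A}"

text \<open>Hypergraphs as (vertex set, edge set).\<close>
type_synonym 'a hypergraph = "'a set \<times> 'a set set"

definition induced_hypergraph :: "'a hypergraph \<Rightarrow> 'a set \<Rightarrow> 'a hypergraph" where
  "induced_hypergraph H S = (S, {E \<inter> S | E. E \<in> snd H})"

definition hits_all :: "'a hypergraph \<Rightarrow> 'a set \<Rightarrow> bool" where
  "hits_all H T \<longleftrightarrow> T \<subseteq> fst H \<and> (\<forall>E\<in>snd H. T \<inter> E \<noteq> {})"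

definition Tr :: "'a hypergraph \<Rightarrow> 'a set set" where
  "Tr H = {T. hits_all H T \<and> (\<forall>T'. T' \<subset> T \<longrightarrow> \<not> hits_all H T')}"

definition H_j :: "'a set \<Rightarrow> ('a set \<Rightarrow> 'a set) \<Rightarrow> 'a \<Rightarrow> 'a hypergraph" where
  "H_j X phi j = (X - \<Inter> (max_closed_avoiding X phi j),
                  {X - M | M. M \<in> max_closed_avoiding X phi j})"

end

theory Submission
  imports Defs
begin

text \<open>
  A set T meets every complement X - M of a maximal closed set M avoiding j exactly when
  j \<in> \<phi> T, so for any P the minimal transversals of H_j[P] are the minimal generators
  of j inside P. It remains to see that a minimal generator A of j inside pred(j) is critical.
  Ranks control the critical base: a minimal generator of x not containing x lies strictly
  above x, the closure of a set lying on one level adds only lower elements, and, by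
  irredundancy, every critical premise of j lies exactly one level above j. Hence A lies on
  that level, the critical implication that puts j into \<phi> A has its premise inside A, and
  minimality of A forces the two to coincide.
\<close>

lemma implicational_base_ground:
  "implicational_base X phi \<Sigma> \<Longrightarrow> (C, b) \<in> \<Sigma> \<Longrightarrow> C \<subseteq> X \<and> b \<in> X"
  unfolding implicational_base_def unit_base_def by blast

lemma irredundant_base_separating_set:
  assumes irr: "irredundant_base X phi \<Sigma>" and B: "(B, j) \<in> \<Sigma>"
  obtains S where "base_closed X (\<Sigma> - {(B, j)}) S" "B \<subseteq> S" "j \<notin> S"
proof -
  have base: "implicational_base X phi \<Sigma>"
    and not_base: "\<not> implicational_base X phi (\<Sigma> - {(B, j)})"
    using irr B unfolding irredundant_base_def by blast+
  then have "unit_base X (\<Sigma> - {(B, j)})"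
    unfolding implicational_base_def unit_base_def by blast
  with not_base obtain S
    where S: "\<not> (base_closed X (\<Sigma> - {(B, j)}) S \<longleftrightarrow> is_closed X phi S)"
    unfolding implicational_base_def by blast
  have "is_closed X phi S \<Longrightarrow> base_closed X (\<Sigma> - {(B, j)}) S"
    using base unfolding implicational_base_def base_closed_def by blast
  with S have closed: "base_closed X (\<Sigma> - {(B, j)}) S" and "\<not> is_closed X phi S"
    by blast+
  then have "\<not> base_closed X \<Sigma> S"
    using base unfolding implicational_base_def by blast
  with closed have "B \<subseteq> S \<and> j \<notin> S"
    unfolding base_closed_def by blast
  with closed that show thesis by blast
qed

lemma irredundant_base_conclusion_notin_premise:
  assumes "irredundant_base X phi \<Sigma>" and "(B, j) \<in> \<Sigma>"
  shows "j \<notin> B"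
  using irredundant_base_separating_set[OF assms] by blast

lemma closed_avoiding_subset_max_closed_avoiding:
  assumes "finite X" and "is_closed X phi T" and "j \<notin> T"
  shows "\<exists>M\<in>max_closed_avoiding X phi j. T \<subseteq> M"
proof -
  let ?F = "{M. is_closed X phi M \<and> j \<notin> M \<and> T \<subseteq> M}"
  have "?F \<subseteq> Pow X"
    unfolding is_closed_def by auto
  with \<open>finite X\<close> have "finite ?F"
    by (metis finite_Pow_iff finite_subset)
  moreover have "T \<in> ?F"
    using assms by simp
  ultimately obtain M where M: "M \<in> ?F" and max: "\<forall>M'\<in>?F. M \<subseteq> M' \<longrightarrow> M = M'"
    using finite_has_maximal2[of ?F T] by auto
  have "M \<in> max_closed_avoiding X phi j"
    unfolding max_closed_avoiding_def
  proof (intro CollectI conjI allI impI)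
    show "is_closed X phi M" "j \<notin> M"
      using M by simp_all
    fix M' assume "is_closed X phi M' \<and> j \<notin> M' \<and> M \<subseteq> M'"
    with M max show "M' = M" by auto
  qed
  with M show ?thesis by blast
qed

locale closure_space =
  fixes X :: "'a set" and phi :: "'a set \<Rightarrow> 'a set"
  assumes closure_operator: "closure_operator X phi"
begin

lemma cl_extensive: "A \<subseteq> X \<Longrightarrow> A \<subseteq> phi A"
  and cl_subset: "A \<subseteq> X \<Longrightarrow> phi A \<subseteq> X"
  and cl_mono: "A \<subseteq> B \<Longrightarrow> B \<subseteq> X \<Longrightarrow> phi A \<subseteq> phi B"
  and cl_idem: "A \<subseteq> X \<Longrightarrow> phi (phi A) = phi A"
  using closure_operator unfolding closure_operator_def by simp_all

lemma closed_cl: "A \<subseteq> X \<Longrightarrow> is_closed X phi (phi A)"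
  using cl_subset cl_idem unfolding is_closed_def by blast

lemma cl_least: "A \<subseteq> T \<Longrightarrow> is_closed X phi T \<Longrightarrow> phi A \<subseteq> T"
  using cl_mono unfolding is_closed_def by metis

lemma implicational_base_closedI:
  assumes "implicational_base X phi \<Sigma>" and "U \<subseteq> X"
    and "\<And>C b. (C, b) \<in> \<Sigma> \<Longrightarrow> C \<subseteq> U \<Longrightarrow> b \<in> U"
  shows "is_closed X phi U"
  using assms unfolding implicational_base_def base_closed_def by blast

lemma closed_implication:
  assumes "implicational_base X phi \<Sigma>" and "is_closed X phi T"
    and "(C, b) \<in> \<Sigma>" and "C \<subseteq> T"
  shows "b \<in> T"
  using assms unfolding implicational_base_def base_closed_def by blast

lemma implication_valid:
  assumes base: "implicational_base X phi \<Sigma>" and "(C, b) \<in> \<Sigma>"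
  shows "b \<in> phi C"
proof -
  have "C \<subseteq> X"
    using implicational_base_ground[OF assms] by blast
  then show ?thesis
    using closed_implication[OF base closed_cl] cl_extensive assms(2) by blast
qed

lemma implication_into_closure:
  assumes base: "implicational_base X phi \<Sigma>"
    and S: "S \<subseteq> X" and x: "x \<in> phi S" "x \<notin> S"
  obtains C where "(C, x) \<in> \<Sigma>" and "C \<subseteq> phi S - {x}"
proof -
  have "\<not> is_closed X phi (phi S - {x})"
  proof
    assume closed: "is_closed X phi (phi S - {x})"
    have "S \<subseteq> phi S - {x}"
      using cl_extensive[OF S] x(2) by blast
    then have "phi S \<subseteq> phi S - {x}"
      using closed by (rule cl_least)
    with x(1) show False by blast
  qed
  then obtain C b where Cb: "(C, b) \<in> \<Sigma>" and C: "C \<subseteq> phi S - {x}" and "b \<notin> phi S - {x}"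
    using implicational_base_closedI[OF base, of "phi S - {x}"] cl_subset[OF S] by blast
  moreover have "b \<in> phi S"
    using closed_implication[OF base closed_cl[OF S] Cb] C by blast
  ultimately show thesis
    using that by blast
qed

lemma hits_all_H_j_iff:
  assumes fin: "finite X" and TP: "T \<subseteq> P" and TX: "T \<subseteq> X"
  shows "hits_all (induced_hypergraph (H_j X phi j) P) T \<longleftrightarrow> j \<in> phi T"
proof -
  let ?M = "max_closed_avoiding X phi j"
  have "hits_all (induced_hypergraph (H_j X phi j) P) T \<longleftrightarrow>
      (\<forall>M\<in>?M. T \<inter> ((X - M) \<inter> P) \<noteq> {})"
    using TP unfolding hits_all_def induced_hypergraph_def H_j_def by auto
  also have "\<dots> \<longleftrightarrow> j \<in> phi T"
  proof
    assume hits: "\<forall>M\<in>?M. T \<inter> ((X - M) \<inter> P) \<noteq> {}"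
    show "j \<in> phi T"
    proof (rule ccontr)
      assume "j \<notin> phi T"
      then obtain M where M: "M \<in> ?M" and "phi T \<subseteq> M"
        using closed_avoiding_subset_max_closed_avoiding[OF fin closed_cl[OF TX]] by blast
      with cl_extensive[OF TX] have "T \<subseteq> M" by blast
      with hits M TP show False by blast
    qed
  next
    assume j: "j \<in> phi T"
    show "\<forall>M\<in>?M. T \<inter> ((X - M) \<inter> P) \<noteq> {}"
    proof (intro ballI notI)
      fix M assume M: "M \<in> ?M" and "T \<inter> ((X - M) \<inter> P) = {}"
      with TP TX have "T \<subseteq> M" by blast
      moreover have "is_closed X phi M" and "j \<notin> M"
        using M unfolding max_closed_avoiding_def by simp_all
      ultimately show False
        using cl_least j by blast
    qed
  qed
  finally show ?thesis .
qed

lemma Tr_induced_H_j_iff_minimal_generator: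
  assumes fin: "finite X" and A: "A \<subseteq> X"
  shows "A \<in> Tr (induced_hypergraph (H_j X phi j) P) \<longleftrightarrow>
    A \<subseteq> P \<and> minimal_generator X phi A j"
proof -
  let ?H = "induced_hypergraph (H_j X phi j) P"
  have hits: "hits_all ?H T \<longleftrightarrow> T \<subseteq> P \<and> j \<in> phi T" if "T \<subseteq> A" for T
    using hits_all_H_j_iff[OF fin, of T P] that A
    unfolding hits_all_def induced_hypergraph_def by auto
  have "(\<forall>T. T \<subset> A \<longrightarrow> \<not> (T \<subseteq> P \<and> j \<in> phi T)) \<longleftrightarrow> (\<forall>x\<in>A. j \<notin> phi (A - {x}))"
    if "A \<subseteq> P"
  proof
    assume "\<forall>T. T \<subset> A \<longrightarrow> \<not> (T \<subseteq> P \<and> j \<in> phi T)"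
    with that show "\<forall>x\<in>A. j \<notin> phi (A - {x})" by blast
  next
    assume min: "\<forall>x\<in>A. j \<notin> phi (A - {x})"
    show "\<forall>T. T \<subset> A \<longrightarrow> \<not> (T \<subseteq> P \<and> j \<in> phi T)"
    proof (intro allI impI notI)
      fix T assume "T \<subset> A" and "T \<subseteq> P \<and> j \<in> phi T"
      then obtain x where "x \<in> A" and "j \<in> phi (A - {x})"
        using cl_mono[of T "A - {x}" for x] A by blast
      with min show False by blast
    qed
  qed
  then show ?thesis
    using hits A unfolding Tr_def minimal_generator_def by auto
qed

end

locale ranked_closure_space = closure_space +
  fixes R :: "('a set \<times> 'a) set" and rho :: "'a \<Rightarrow> nat"
  assumes cl_empty: "phi {} = {}"
    and base_R: "implicational_base X phi R"
    and rank_R: "(C, b) \<in> R \<Longrightarrow> a \<in> C \<Longrightarrow> rho a = rho b + 1"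
begin

lemma cl_level_subset:
  assumes A: "A \<subseteq> X" and level: "\<forall>a\<in>A. rho a = k"
  shows "phi A \<subseteq> A \<union> {x. rho x < k}"
proof -
  let ?U = "A \<union> {x\<in>X. rho x < k}"
  have "is_closed X phi ?U"
  proof (rule implicational_base_closedI[OF base_R])
    show "?U \<subseteq> X" using A by blast
  next
    fix C b assume Cb: "(C, b) \<in> R" and "C \<subseteq> ?U"
    have "b \<in> X"
      using implicational_base_ground[OF base_R Cb] by blast
    show "b \<in> ?U"
    proof (cases "C = {}")
      case True
      with implication_valid[OF base_R Cb] cl_empty show ?thesis by simp
    next
      case False
      then obtain a where a: "a \<in> C" by blast
      with \<open>C \<subseteq> ?U\<close> level have "rho a \<le> k" by fastforce
      with rank_R[OF Cb a] \<open>b \<in> X\<close> show ?thesis by simp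
    qed
  qed
  with cl_least[of A ?U] show ?thesis by blast
qed

lemma mem_cl_higher_part:
  assumes S: "S \<subseteq> X" and x: "x \<in> phi S" "x \<notin> S"
  shows "x \<in> phi (S \<inter> {y. rho x < rho y})"
proof (rule ccontr)
  let ?S\<^sub>0 = "S \<inter> {y. rho x < rho y}"
  let ?W = "phi ?S\<^sub>0 \<union> ({y\<in>X. rho y \<le> rho x} - {x})"
  assume x_notin: "x \<notin> phi ?S\<^sub>0"
  have S\<^sub>0: "?S\<^sub>0 \<subseteq> X" using S by blast
  have "is_closed X phi ?W"
  proof (rule implicational_base_closedI[OF base_R])
    show "?W \<subseteq> X" using cl_subset[OF S\<^sub>0] by blast
  next
    fix C b assume Cb: "(C, b) \<in> R" and C: "C \<subseteq> ?W"
    have "b \<in> X"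
      using implicational_base_ground[OF base_R Cb] by blast
    show "b \<in> ?W"
    proof (cases "rho b < rho x \<or> (rho b = rho x \<and> b \<noteq> x)")
      case True
      with \<open>b \<in> X\<close> show ?thesis by auto
    next
      case False
      with C rank_R[OF Cb] have "C \<subseteq> phi ?S\<^sub>0" by fastforce
      with closed_implication[OF base_R closed_cl[OF S\<^sub>0] Cb] show ?thesis by blast
    qed
  qed
  moreover have "S \<subseteq> ?W"
    using cl_extensive[OF S\<^sub>0] S x(2) by auto
  ultimately have "phi S \<subseteq> ?W"
    using cl_least by blast
  with x x_notin show False by blast
qed

lemma minimal_generator_rank_gt:
  assumes mg: "minimal_generator X phi B x" and "x \<notin> B"
  shows "B \<subseteq> {y. rho x < rho y}"
proof
  fix b assume b: "b \<in> B"
  have B: "B \<subseteq> X"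
    using mg unfolding minimal_generator_def by blast
  have "x \<in> phi (B \<inter> {y. rho x < rho y})"
    using mem_cl_higher_part[OF B _ \<open>x \<notin> B\<close>] mg unfolding minimal_generator_def by blast
  moreover have "x \<notin> phi (B - {b})"
    using mg b unfolding minimal_generator_def by blast
  ultimately have "\<not> B \<inter> {y. rho x < rho y} \<subseteq> B - {b}"
    using cl_mono B by blast
  with b show "b \<in> {y. rho x < rho y}" by blast
qed

end

locale ranked_critical_base = ranked_closure_space +
  fixes \<Sigma> :: "('a set \<times> 'a) set"
  assumes critical: "critical_base X phi \<Sigma>"
begin

lemma irredundant: "irredundant_base X phi \<Sigma>"
  using critical unfolding critical_base_def by blast

lemma base_\<Sigma>: "implicational_base X phi \<Sigma>"
  using irredundant unfolding irredundant_base_def by blast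

lemma minimal_generator_premise: "(B, b) \<in> \<Sigma> \<Longrightarrow> minimal_generator X phi B b"
  using critical unfolding critical_base_def by fastforce

lemma critical_premise_rank_gt:
  assumes "(B, b) \<in> \<Sigma>"
  shows "B \<subseteq> {y. rho b < rho y}"
  using minimal_generator_rank_gt minimal_generator_premise
    irredundant_base_conclusion_notin_premise[OF irredundant] assms by blast

lemma critical_premise_subset_level_generator:
  assumes C: "C \<subseteq> X" and level: "\<forall>c\<in>C. rho c = rho j + 1" and j: "j \<in> phi C"
  obtains B where "(B, j) \<in> \<Sigma>" and "B \<subseteq> C"
proof -
  have "j \<notin> C"
    using level by fastforce
  then obtain B where B: "(B, j) \<in> \<Sigma>" and "B \<subseteq> phi C - {j}"
    using implication_into_closure[OF base_\<Sigma> C j] by blast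
  with cl_level_subset[OF C level] critical_premise_rank_gt[OF B] have "B \<subseteq> C"
    by fastforce
  with B that show thesis by blast
qed

lemma critical_premise_rank:
  assumes B: "(B, j) \<in> \<Sigma>" and a: "a \<in> B"
  shows "rho a = rho j + 1"
proof (rule ccontr)
  assume a_rank: "rho a \<noteq> rho j + 1"
  obtain S where S_closed: "base_closed X (\<Sigma> - {(B, j)}) S" and "B \<subseteq> S" and "j \<notin> S"
    using irredundant_base_separating_set[OF irredundant B] by blast
  have S: "S \<subseteq> X"
    using S_closed unfolding base_closed_def by blast
  have j: "j \<in> X"
    using implicational_base_ground[OF base_\<Sigma> B] by blast
  let ?Z = "(S \<inter> {y. rho j < rho y}) \<union> ({y\<in>X. rho y \<le> rho j} - {j})"
  have Z: "?Z \<subseteq> X" and "j \<notin> ?Z"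
    using S by blast+
  have "is_closed X phi (insert j ?Z)"
  proof (rule implicational_base_closedI[OF base_\<Sigma>])
    show "insert j ?Z \<subseteq> X" using Z j by blast
  next
    fix C x assume Cx: "(C, x) \<in> \<Sigma>" and C: "C \<subseteq> insert j ?Z"
    show "x \<in> insert j ?Z"
    proof (cases "rho x \<le> rho j")
      case True
      with implicational_base_ground[OF base_\<Sigma> Cx] show ?thesis by blast
    next
      case False
      with C critical_premise_rank_gt[OF Cx] have "C \<subseteq> S" by fastforce
      moreover have "(C, x) \<in> \<Sigma> - {(B, j)}" using Cx False by auto
      ultimately have "x \<in> S" using S_closed unfolding base_closed_def by blast
      with False show ?thesis by auto
    qed
  qed
  then have Z_cl: "phi ?Z \<subseteq> insert j ?Z"
    by (rule cl_least[OF subset_insertI])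
  have "B \<subseteq> ?Z"
    using \<open>B \<subseteq> S\<close> critical_premise_rank_gt[OF B] by blast
  then have "j \<in> phi ?Z"
    using cl_mono[OF _ Z] implication_valid[OF base_\<Sigma> B] by blast
  then obtain C where C: "(C, j) \<in> R" and "C \<subseteq> phi ?Z - {j}"
    using implication_into_closure[OF base_R Z _ \<open>j \<notin> ?Z\<close>] by blast
  moreover have level: "\<forall>c\<in>C. rho c = rho j + 1"
    using rank_R[OF C] by blast
  ultimately have "C \<subseteq> S"
    using Z_cl by fastforce
  then obtain B' where B': "(B', j) \<in> \<Sigma>" and "B' \<subseteq> C"
    using critical_premise_subset_level_generator[OF _ level implication_valid[OF base_R C]] S
    by blast
  \<comment> \<open>B' differs from B, which contains the element a off the level of C.\<close>
  with a a_rank level have "(B', j) \<in> \<Sigma> - {(B, j)}" by auto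
  moreover have "B' \<subseteq> S"
    using \<open>B' \<subseteq> C\<close> \<open>C \<subseteq> S\<close> by blast
  ultimately have "j \<in> S"
    using S_closed unfolding base_closed_def by blast
  with \<open>j \<notin> S\<close> show False ..
qed

lemma critical_iff_minimal_generator_in_pred:
  "(A, j) \<in> \<Sigma> \<longleftrightarrow> A \<subseteq> pred \<Sigma> j \<and> minimal_generator X phi A j"
proof
  assume "(A, j) \<in> \<Sigma>"
  with minimal_generator_premise show "A \<subseteq> pred \<Sigma> j \<and> minimal_generator X phi A j"
    unfolding pred_def by blast
next
  assume "A \<subseteq> pred \<Sigma> j \<and> minimal_generator X phi A j"
  then have A_pred: "A \<subseteq> pred \<Sigma> j" and mg: "minimal_generator X phi A j" by blast+
  have A: "A \<subseteq> X" and "j \<in> phi A"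
    using mg unfolding minimal_generator_def by blast+
  moreover have "\<forall>a\<in>A. rho a = rho j + 1"
    using A_pred critical_premise_rank unfolding pred_def by blast
  ultimately obtain B where B: "(B, j) \<in> \<Sigma>" and "B \<subseteq> A"
    using critical_premise_subset_level_generator by blast
  have "B = A"
  proof (rule ccontr)
    assume "B \<noteq> A"
    with \<open>B \<subseteq> A\<close> obtain x where "x \<in> A" and "B \<subseteq> A - {x}" by blast
    with cl_mono A implication_valid[OF base_\<Sigma> B] mg show False
      unfolding minimal_generator_def by blast
  qed
  with B show "(A, j) \<in> \<Sigma>" by simp
qed

end

theorem theorem5:
  fixes X :: "'a set" and phi :: "'a set \<Rightarrow> 'a set"
    and \<Sigma> :: "('a set \<times> 'a) set" and j :: 'a and A :: "'a set"
  assumes "ranked_convex_geometry X phi"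
    and "critical_base X phi \<Sigma>"
    and "j \<in> X"
    and "A \<subseteq> X"
  shows "critical_minimal_generator X phi \<Sigma> A j \<longleftrightarrow>
         A \<in> Tr (induced_hypergraph (H_j X phi j) (pred \<Sigma> j))"
proof -
  obtain R and rho :: "'a \<Rightarrow> nat"
    where "finite X" and "standard X phi" and "implicational_base X phi R"
      and "\<forall>(C, b)\<in>R. \<forall>a\<in>C. rho a = rho b + 1"
    using assms(1) unfolding ranked_convex_geometry_def ranked_def by blast
  then interpret ranked_critical_base X phi R rho \<Sigma>
    using assms(2) unfolding standard_def by unfold_locales fast+
  show ?thesis
    unfolding critical_minimal_generator_def critical_iff_minimal_generator_in_pred
      Tr_induced_H_j_iff_minimal_generator[OF \<open>finite X\<close> assms(4)]
    by blast
qed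

end
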